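(* Let $O$ be the origin of $\mathbb{R}^3$ and $R>0$. Let $x:[0,\tau_1]\to\mathbb{R}^3$ be a twice continuously differentiable trajectory with nowhere-vanishing velocity, satisfying $\ddot x(\tau) = -\kappa(\tau)\,x(\tau)$ with $\kappa(\tau)>0$ for all $\tau$, with $A_0 = x(0)$, $|A_0|<R$, and let $B$ be the first point of the trajectory on the sphere $\{|p|=R\}$. Reparametrize the trajectory from $A_0$ to $B$ by arclength $\sigma\in[0,L_{A_0B}]$, where $L_{A_0B}$ is the arclength from $A_0$ to $B$. Define iteratively $\sigma_0=0$ and, for $t\ge 0$: $A_t$ is the point of the trajectory at arclength $\sigma_t$, $d_t$ is the unit tangent direction of the trajectory at $A_t$, $P_t = A_t + u\,d_t$ is the point where the straight ray from $A_t$ in direction $d_t$ meets the sphere $\{|p|=R\}$ (with $u\ge 0$, and $P_t=A_t$ if $A_t$ is on the sphere), $s_t = |A_tP_t|$, and $\sigma_{t+1}=\sigma_t+s_t$. Then $$\lim_{T\to\infty}\sum_{t=0}^{T} s_t = L_{A_0B}.$$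
   Context: This models an iterative ray-tracing step scheme inside the near-field ball of radius $R$ around a black hole centered at $O$, where gravity is approximated by Newtonian attraction toward the center: at each step the ray is advanced along its true (curved) path by the straight-line distance from the current point, along the current tangent direction, to the boundary sphere. $|A_tP_t|$ denotes Euclidean distance. *)

theory Defs
  imports "HOL-Analysis.Analysis"
begin

definition arc_len :: "(real \<Rightarrow> real^3) \<Rightarrow> real \<Rightarrow> real" where
  "arc_len x' \<tau> = integral {0..\<tau>} (\<lambda>r. norm (x' r))"

definition arc_time :: "(real \<Rightarrow> real^3) \<Rightarrow> real \<Rightarrow> real \<Rightarrow> real" where
  "arc_time x' \<tau>1 \<sigma> = (THE \<tau>. \<tau> \<in> {0..\<tau>1} \<and> arc_len x' \<tau> = \<sigma>)"

definition first_hit_time :: "(real \<Rightarrow> real^3) \<Rightarrow> real \<Rightarrow> real \<Rightarrow> real" where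
  "first_hit_time x \<tau>1 R = Inf {\<tau> \<in> {0..\<tau>1}. norm (x \<tau>) = R}"

definition sphere_hit :: "real \<Rightarrow> real^3 \<Rightarrow> real^3 \<Rightarrow> real^3" where
  "sphere_hit R A d =
     (if norm A = R then A else A + (THE u. u \<ge> 0 \<and> norm (A + u *\<^sub>R d) = R) *\<^sub>R d)"

definition ray_step :: "(real \<Rightarrow> real^3) \<Rightarrow> (real \<Rightarrow> real^3) \<Rightarrow> real \<Rightarrow> real \<Rightarrow> real \<Rightarrow> real" where
  "ray_step x x' \<tau>1 R \<sigma> =
     (let \<tau> = arc_time x' \<tau>1 \<sigma>; A = x \<tau>; d = (1 / norm (x' \<tau>)) *\<^sub>R x' \<tau>
      in dist A (sphere_hit R A d))"

primrec ray_sigma :: "(real \<Rightarrow> real^3) \<Rightarrow> (real \<Rightarrow> real^3) \<Rightarrow> real \<Rightarrow> real \<Rightarrow> nat \<Rightarrow> real" where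
  "ray_sigma x x' \<tau>1 R 0 = 0"
| "ray_sigma x x' \<tau>1 R (Suc t) = ray_sigma x x' \<tau>1 R t + ray_step x x' \<tau>1 R (ray_sigma x x' \<tau>1 R t)"

end

theory Submission
  imports Defs
begin

text \<open>
For a point A inside the ball and a unit vector d, the ray A + u d leaves the ball at
u = -(A.d) + sqrt ((A.d)^2 + R^2 - |A|^2). Let U(tau) be this exit distance for A = x(tau) and d
the unit tangent, and L(tau) the arclength. Under the central attraction x'' = -kappa x, with
v = |x'| and p = x.d,
  (L + U)' = kappa (|x|^2 - p^2) / v * (1 - p / sqrt (p^2 + R^2 - |x|^2)),
which is nonnegative by Cauchy-Schwarz and since p is smaller than the square root. At the first
exit time B the velocity points outwards, so U(B) = 0 and hence L + U <= L(B) on [0, B]: the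
iteration sigma_(t+1) = L(tau_t) + U(tau_t) never overshoots L(B). Every step is at least
R - |x(tau_t)|, which stays bounded away from 0 while tau_t ranges over a compact part of [0, B),
so the increasing sequence sigma_t cannot stall below L(B).
\<close>

definition ray_exit_dist :: "real \<Rightarrow> 'a::real_inner \<Rightarrow> 'a \<Rightarrow> real" where
  "ray_exit_dist R A d = - (A \<bullet> d) + sqrt ((A \<bullet> d)\<^sup>2 + R\<^sup>2 - (norm A)\<^sup>2)"

lemma ray_exit_dist_iff:
  fixes A d :: "'a::real_inner"
  assumes A: "norm A < R" and d: "norm d = 1"
  shows "u \<ge> 0 \<and> norm (A + u *\<^sub>R d) = R \<longleftrightarrow> u = ray_exit_dist R A d"
proof -
  define p where "p = A \<bullet> d"
  define S where "S = sqrt (p\<^sup>2 + R\<^sup>2 - (norm A)\<^sup>2)"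
  have inside: "(norm A)\<^sup>2 < R\<^sup>2"
    using A by (simp add: power_strict_mono)
  then have S2: "S\<^sup>2 = p\<^sup>2 + R\<^sup>2 - (norm A)\<^sup>2"
    unfolding S_def using zero_le_power2[of p] by (intro real_sqrt_pow2) linarith
  have "sqrt (p\<^sup>2) < S"
    unfolding S_def using inside by (intro real_sqrt_less_mono) linarith
  then have pS: "\<bar>p\<bar> < S"
    by simp
  have "d \<bullet> d = 1"
    using d by (simp add: power2_norm_eq_inner[symmetric])
  then have "(norm (A + u *\<^sub>R d))\<^sup>2 = (u + p)\<^sup>2 + R\<^sup>2 - S\<^sup>2"
    unfolding S2 p_def power2_norm_eq_inner
    by (simp add: inner_add_left inner_add_right inner_commute power2_eq_square algebra_simps)
  then have "norm (A + u *\<^sub>R d) = R \<longleftrightarrow> (u + p)\<^sup>2 = S\<^sup>2"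
    using A by (smt (verit) norm_ge_zero power2_eq_iff_nonneg)
  also have "\<dots> \<longleftrightarrow> u = - p + S \<or> u = - p - S"
    by (auto simp: power2_eq_iff)
  finally show ?thesis
    using pS unfolding ray_exit_dist_def p_def[symmetric] S_def[symmetric] by auto
qed

lemma dist_sphere_hit:
  fixes A d :: "real^3"
  assumes "norm A < R" and "norm d = 1"
  shows "dist A (sphere_hit R A d) = ray_exit_dist R A d"
proof -
  have "sphere_hit R A d = A + ray_exit_dist R A d *\<^sub>R d"
    using assms ray_exit_dist_iff[OF assms] unfolding sphere_hit_def by (simp add: the_equality)
  then show ?thesis
    using assms ray_exit_dist_iff[OF assms, of "ray_exit_dist R A d"] by (simp add: dist_norm)
qed

lemma ray_exit_dist_ge:
  fixes A d :: "'a::real_inner"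
  assumes "norm A < R" and "norm d = 1"
  shows "R - norm A \<le> ray_exit_dist R A d"
proof -
  have "R = norm (A + ray_exit_dist R A d *\<^sub>R d)" and "ray_exit_dist R A d \<ge> 0"
    using ray_exit_dist_iff[OF assms, of "ray_exit_dist R A d"] by auto
  then show ?thesis
    using norm_triangle_ineq[of A "ray_exit_dist R A d *\<^sub>R d"] assms(2) by simp
qed

lemma ray_exit_dist_on_sphere:
  "norm A = R \<Longrightarrow> A \<bullet> d \<ge> 0 \<Longrightarrow> ray_exit_dist R A d = 0"
  by (simp add: ray_exit_dist_def)

lemma has_real_derivative_inner:
  fixes f g :: "real \<Rightarrow> 'a::real_inner"
  assumes "(f has_vector_derivative f') (at t within S)" and "(g has_vector_derivative g') (at t within S)"
  shows "((\<lambda>s. f s \<bullet> g s) has_real_derivative f' \<bullet> g t + f t \<bullet> g') (at t within S)"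
  using has_derivative_inner[OF assms[unfolded has_vector_derivative_def]]
  unfolding has_field_derivative_def
  by (rule has_derivative_eq_rhs) (auto simp: algebra_simps)

lemma tangent_projection_deriv:
  fixes x x' :: "real \<Rightarrow> 'a::real_inner"
  assumes x: "(x has_vector_derivative x' t) (at t)"
    and x': "(x' has_vector_derivative - (k *\<^sub>R x t)) (at t)"
    and nz: "x' t \<noteq> 0"
  defines "v \<equiv> norm (x' t)" and "p \<equiv> x t \<bullet> sgn (x' t)"
  shows "((\<lambda>s. x s \<bullet> sgn (x' s)) has_real_derivative v - k * ((norm (x t))\<^sup>2 - p\<^sup>2) / v) (at t)"
proof -
  define a where "a s = x s \<bullet> x' s" for s
  have v: "v > 0"
    using nz by (simp add: v_def)
  have da: "(a has_real_derivative v\<^sup>2 - k * (norm (x t))\<^sup>2) (at t)"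
    using has_real_derivative_inner[OF x x'] unfolding a_def[abs_def]
    by (simp add: v_def power2_norm_eq_inner)
  have "((\<lambda>s. norm (x' s)) has_derivative (\<lambda>h. (h *\<^sub>R - (k *\<^sub>R x t)) \<bullet> sgn (x' t))) (at t)"
    using has_derivative_compose[OF x'[unfolded has_vector_derivative_def] has_derivative_norm[OF nz]] .
  then have dv: "((\<lambda>s. norm (x' s)) has_real_derivative - k * a t / v) (at t)"
    unfolding has_field_derivative_def
    by (rule has_derivative_eq_rhs) (auto simp: a_def v_def sgn_div_norm inner_commute field_simps)
  have "a t = p * v"
    using v by (simp add: p_def a_def v_def sgn_div_norm)
  with DERIV_divide[OF da dv] v
  have "((\<lambda>s. a s / norm (x' s)) has_real_derivative
          ((v\<^sup>2 - k * (norm (x t))\<^sup>2) * v - p * v * (- k * p * v / v)) / v\<^sup>2) (at t)"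
    by (simp add: v_def power2_eq_square)
  moreover have "\<And>s. a s / norm (x' s) = x s \<bullet> sgn (x' s)"
    by (simp add: a_def sgn_div_norm divide_inverse_commute)
  ultimately have "((\<lambda>s. x s \<bullet> sgn (x' s)) has_real_derivative
          ((v\<^sup>2 - k * (norm (x t))\<^sup>2) * v - p * v * (- k * p * v / v)) / v\<^sup>2) (at t)"
    by simp
  then show ?thesis
    by (rule DERIV_cong) (use v in \<open>simp add: field_simps power2_eq_square\<close>)
qed

lemma ray_exit_dist_along_trajectory_deriv:
  fixes x x' :: "real \<Rightarrow> 'a::real_inner"
  assumes x: "(x has_vector_derivative x' t) (at t)"
    and x': "(x' has_vector_derivative - (k *\<^sub>R x t)) (at t)"
    and nz: "x' t \<noteq> 0" and inside: "norm (x t) < R"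
  defines "v \<equiv> norm (x' t)" and "p \<equiv> x t \<bullet> sgn (x' t)"
  shows "((\<lambda>s. ray_exit_dist R (x s) (sgn (x' s))) has_real_derivative
           k * ((norm (x t))\<^sup>2 - p\<^sup>2) / v * (1 - p / sqrt (p\<^sup>2 + R\<^sup>2 - (norm (x t))\<^sup>2)) - v)
         (at t)"
proof -
  define q where "q s = (norm (x s))\<^sup>2" for s
  define S where "S = sqrt (p\<^sup>2 + R\<^sup>2 - q t)"
  note dp = tangent_projection_deriv[OF x x' nz, folded v_def p_def q_def]
  have dq: "(q has_real_derivative 2 * p * v) (at t)"
    using has_real_derivative_inner[OF x x] nz unfolding q_def[abs_def] power2_norm_eq_inner
    by (simp add: p_def v_def sgn_div_norm inner_commute field_simps)
  have v: "v > 0"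
    using nz by (simp add: v_def)
  have "q t < R\<^sup>2"
    using inside by (simp add: q_def power_strict_mono)
  then have pos: "p\<^sup>2 + R\<^sup>2 - q t > 0"
    by (smt (verit) zero_le_power2)
  then have S: "S > 0"
    by (simp add: S_def)
  have "((\<lambda>s. (x s \<bullet> sgn (x' s))\<^sup>2 + R\<^sup>2 - q s) has_real_derivative
          2 * p * (v - k * (q t - p\<^sup>2) / v) - 2 * p * v) (at t)"
    using DERIV_diff[OF DERIV_add[OF DERIV_power[OF dp, of 2] DERIV_const[of "R\<^sup>2"]] dq]
    by (simp add: p_def mult_ac)
  from DERIV_chain2[OF DERIV_real_sqrt[OF pos[unfolded p_def]] this]
  have "((\<lambda>s. sqrt ((x s \<bullet> sgn (x' s))\<^sup>2 + R\<^sup>2 - q s)) has_real_derivative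
          - p * k * (q t - p\<^sup>2) / (v * S)) (at t)"
    unfolding p_def[symmetric] S_def[symmetric] by (rule DERIV_cong) (use S v in \<open>simp add: field_simps\<close>)
  from DERIV_add[OF DERIV_minus[OF dp] this]
  have "((\<lambda>s. - (x s \<bullet> sgn (x' s)) + sqrt ((x s \<bullet> sgn (x' s))\<^sup>2 + R\<^sup>2 - q s)) has_real_derivative
          k * (q t - p\<^sup>2) / v * (1 - p / S) - v) (at t)"
    by (rule DERIV_cong) (use v S in \<open>simp add: field_simps\<close>)
  then show ?thesis
    by (simp add: ray_exit_dist_def q_def S_def)
qed

lemma ray_exit_dist_rate_factor_nonneg:
  fixes A d :: "'a::real_inner"
  assumes A: "norm A < R" and d: "norm d = 1" and "k \<ge> 0" and "v > 0"
  shows "0 \<le> k * ((norm A)\<^sup>2 - (A \<bullet> d)\<^sup>2) / v * (1 - (A \<bullet> d) / sqrt ((A \<bullet> d)\<^sup>2 + R\<^sup>2 - (norm A)\<^sup>2))"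
proof -
  have "\<bar>A \<bullet> d\<bar> \<le> norm A"
    using Cauchy_Schwarz_ineq2[of A d] d by simp
  then have cs: "(A \<bullet> d)\<^sup>2 \<le> (norm A)\<^sup>2"
    using power_mono[of "\<bar>A \<bullet> d\<bar>" "norm A" 2] by simp
  define S where "S = sqrt ((A \<bullet> d)\<^sup>2 + R\<^sup>2 - (norm A)\<^sup>2)"
  have "sqrt ((A \<bullet> d)\<^sup>2) < S"
    unfolding S_def using A by (intro real_sqrt_less_mono) (simp add: power_strict_mono)
  then have "A \<bullet> d \<le> S" and "S > 0"
    by auto
  then have "A \<bullet> d / S \<le> 1"
    by (simp add: divide_le_eq_1)
  with cs assms(3,4) show ?thesis
    unfolding S_def[symmetric] by simp
qed

lemma inner_derivative_nonneg_at_left_norm_max: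
  fixes x :: "real \<Rightarrow> 'a::real_inner"
  assumes deriv: "(x has_vector_derivative v) (at t within {a..b})"
    and t: "t \<in> {a<..b}" and below: "\<And>s. s \<in> {a..<t} \<Longrightarrow> norm (x s) < norm (x t)"
  shows "x t \<bullet> v \<ge> 0"
proof (rule ccontr)
  assume "\<not> x t \<bullet> v \<ge> 0"
  then have neg: "2 * (x t \<bullet> v) < 0"
    by simp
  have "((\<lambda>s. x s \<bullet> x s) has_real_derivative 2 * (x t \<bullet> v)) (at t within {a..b})"
    using has_real_derivative_inner[OF deriv deriv] by (simp add: inner_commute)
  from has_real_derivative_neg_dec_left[OF this neg] obtain d where "d > 0"
    and d: "\<And>h. h > 0 \<Longrightarrow> t - h \<in> {a..b} \<Longrightarrow> h < d \<Longrightarrow> x t \<bullet> x t < x (t - h) \<bullet> x (t - h)"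
    by blast
  define h where "h = min (d / 2) (t - a)"
  have "h > 0" "t - h \<in> {a..<t}" "h < d"
    using \<open>d > 0\<close> t by (auto simp: h_def)
  then have "norm (x t) < norm (x (t - h))"
    using d[of h] t by (simp add: norm_eq_sqrt_inner)
  with below[OF \<open>t - h \<in> {a..<t}\<close>] show False
    by simp
qed

lemma arc_len_has_real_derivative:
  assumes "continuous_on {0..\<tau>1} x'" and "t \<in> {0..\<tau>1}"
  shows "(arc_len x' has_real_derivative norm (x' t)) (at t within {0..\<tau>1})"
  unfolding arc_len_def[abs_def] using assms by (intro integral_has_real_derivative continuous_intros)

lemma continuous_on_arc_len:
  assumes "continuous_on {0..\<tau>1} x'"
  shows "continuous_on {0..\<tau>1} (arc_len x')"
  using arc_len_has_real_derivative[OF assms]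
  by (meson DERIV_continuous continuous_on_eq_continuous_within)

lemma arc_len_strict_mono_on:
  assumes cont: "continuous_on {0..\<tau>1} x'" and nz: "\<And>t. t \<in> {0..\<tau>1} \<Longrightarrow> x' t \<noteq> 0"
  shows "strict_mono_on {0..\<tau>1} (arc_len x')"
proof (rule strict_mono_onI)
  fix a b assume ab: "a \<in> {0..\<tau>1}" "b \<in> {0..\<tau>1}" "a < b"
  show "arc_len x' a < arc_len x' b"
  proof (rule DERIV_pos_imp_increasing_open[OF \<open>a < b\<close>])
    fix t assume "a < t" "t < b"
    then have "t \<in> interior {0..\<tau>1}"
      using ab by auto
    then show "\<exists>D. (arc_len x' has_real_derivative D) (at t) \<and> D > 0"
      using arc_len_has_real_derivative[OF cont] nz at_within_interior[of t "{0..\<tau>1}"]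
      by (metis interior_subset subsetD zero_less_norm_iff)
  next
    show "continuous_on {a..b} (arc_len x')"
      using ab by (auto intro: continuous_on_subset[OF continuous_on_arc_len[OF cont]])
  qed
qed

lemma arc_time_arc_len:
  assumes "strict_mono_on {0..\<tau>1} (arc_len x')" and "\<tau> \<in> {0..\<tau>1}"
  shows "arc_time x' \<tau>1 (arc_len x' \<tau>) = \<tau>"
  unfolding arc_time_def using assms by (auto intro!: the_equality dest: strict_mono_on_eqD)

lemma
  fixes x :: "real \<Rightarrow> real^3"
  assumes cont: "continuous_on {0..\<tau>1} x" and start: "norm (x 0) < R"
    and hit: "\<exists>t\<in>{0..\<tau>1}. norm (x t) = R"
  shows first_hit_time_bounds: "first_hit_time x \<tau>1 R \<in> {0<..\<tau>1}"
    and norm_at_first_hit_time: "norm (x (first_hit_time x \<tau>1 R)) = R"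
    and norm_before_first_hit_time: "t \<in> {0..<first_hit_time x \<tau>1 R} \<Longrightarrow> norm (x t) < R"
proof -
  define H where "H = {t \<in> {0..\<tau>1}. norm (x t) = R}"
  have "closed H"
    unfolding H_def by (rule continuous_closed_preimage_constant) (auto intro: continuous_intros cont)
  moreover have bdd: "bdd_below H"
    by (auto simp: H_def bdd_below_def)
  moreover have "H \<noteq> {}"
    using hit by (auto simp: H_def)
  ultimately have mem: "first_hit_time x \<tau>1 R \<in> H"
    unfolding first_hit_time_def H_def[symmetric] by (intro closed_contains_Inf)
  have least: "first_hit_time x \<tau>1 R \<le> t" if "t \<in> H" for t
    unfolding first_hit_time_def H_def[symmetric] using that bdd by (rule cInf_lower)
  from mem show "norm (x (first_hit_time x \<tau>1 R)) = R"
    by (simp add: H_def)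
  with mem start show "first_hit_time x \<tau>1 R \<in> {0<..\<tau>1}"
    by (auto simp: H_def order_less_le)
  show "norm (x t) < R" if t: "t \<in> {0..<first_hit_time x \<tau>1 R}"
  proof (rule ccontr)
    assume "\<not> norm (x t) < R"
    moreover have "continuous_on {0..t} (\<lambda>s. norm (x s))"
      using t mem by (intro continuous_intros continuous_on_subset[OF cont]) (auto simp: H_def)
    ultimately obtain s where "0 \<le> s" "s \<le> t" "norm (x s) = R"
      using IVT'[of "\<lambda>s. norm (x s)" 0 R t] start t by auto
    then have "s \<in> H"
      using t mem by (auto simp: H_def)
    with least[of s] \<open>s \<le> t\<close> t show False
      by auto
  qed
qed

lemma recurrence_tendsto_barrier:
  fixes f :: "real \<Rightarrow> real" and \<sigma> :: "nat \<Rightarrow> real"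
  assumes \<sigma>_Suc: "\<And>n. \<sigma> (Suc n) = \<sigma> n + f (\<sigma> n)"
    and "\<sigma> 0 \<le> l"
    and step_le: "\<And>s. s \<in> {\<sigma> 0..l} \<Longrightarrow> 0 \<le> f s \<and> s + f s \<le> l"
    and step_pos: "\<And>y. y < l \<Longrightarrow> \<exists>c>0. \<forall>s\<in>{\<sigma> 0..y}. c \<le> f s"
  shows "\<sigma> \<longlonglongrightarrow> l"
proof -
  have range: "\<sigma> n \<in> {\<sigma> 0..l}" for n
  proof (induction n)
    case (Suc n)
    then show ?case
      using step_le[OF Suc] by (simp add: \<sigma>_Suc)
  qed (use \<open>\<sigma> 0 \<le> l\<close> in simp)
  have "incseq \<sigma>"
    by (rule incseq_SucI) (use range step_le \<sigma>_Suc in simp)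
  then obtain m where m: "\<sigma> \<longlonglongrightarrow> m" and below_m: "\<And>n. \<sigma> n \<le> m"
    using range by (metis atLeastAtMost_iff incseq_convergent)
  have "m \<le> l"
    using range by (intro LIMSEQ_le_const2[OF m]) auto
  moreover have "\<not> m < l"
  proof
    assume "m < l"
    then obtain c where "c > 0" and c: "\<And>s. s \<in> {\<sigma> 0..m} \<Longrightarrow> c \<le> f s"
      using step_pos by blast
    have linear: "\<sigma> 0 + real n * c \<le> \<sigma> n" for n
    proof (induction n)
      case (Suc n)
      then show ?case
        using c[of "\<sigma> n"] range[of n] below_m[of n] by (simp add: \<sigma>_Suc algebra_simps)
    qed simp
    obtain n where "m - \<sigma> 0 < real n * c"
      using reals_Archimedean3[OF \<open>c > 0\<close>] by blast
    with linear[of n] below_m[of n] show False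
      by simp
  qed
  ultimately show ?thesis
    using m by simp
qed

lemma sum_ray_step_eq_ray_sigma:
  "(\<Sum>t\<le>T. ray_step x x' \<tau>1 R (ray_sigma x x' \<tau>1 R t)) = ray_sigma x x' \<tau>1 R (Suc T)"
  by (induction T) simp_all

locale central_trajectory =
  fixes x x' x'' :: "real \<Rightarrow> real^3" and \<kappa> :: "real \<Rightarrow> real" and \<tau>1 R :: real
  assumes x_deriv: "\<And>t. t \<in> {0..\<tau>1} \<Longrightarrow> (x has_vector_derivative x' t) (at t within {0..\<tau>1})"
    and x'_deriv: "\<And>t. t \<in> {0..\<tau>1} \<Longrightarrow> (x' has_vector_derivative x'' t) (at t within {0..\<tau>1})"
    and x'_nonzero: "\<And>t. t \<in> {0..\<tau>1} \<Longrightarrow> x' t \<noteq> 0"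
    and central_attraction: "\<And>t. t \<in> {0..\<tau>1} \<Longrightarrow> \<kappa> t > 0 \<and> x'' t = - (\<kappa> t *\<^sub>R x t)"
    and start_inside: "norm (x 0) < R"
    and reaches_sphere: "\<exists>t \<in> {0..\<tau>1}. norm (x t) = R"
begin

abbreviation exit_time :: real where
  "exit_time \<equiv> first_hit_time x \<tau>1 R"

abbreviation tangent_exit_dist :: "real \<Rightarrow> real" where
  "tangent_exit_dist \<tau> \<equiv> ray_exit_dist R (x \<tau>) (sgn (x' \<tau>))"

lemma continuous_on_x: "continuous_on {0..\<tau>1} x"
  using x_deriv by (meson continuous_on_eq_continuous_within has_vector_derivative_continuous)

lemma continuous_on_x': "continuous_on {0..\<tau>1} x'"
  using x'_deriv by (meson continuous_on_eq_continuous_within has_vector_derivative_continuous)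

lemma arc_len_strict_mono: "strict_mono_on {0..\<tau>1} (arc_len x')"
  using arc_len_strict_mono_on[OF continuous_on_x' x'_nonzero] .

lemma exit_time_bounds: "exit_time \<in> {0<..\<tau>1}"
  and norm_at_exit_time: "norm (x exit_time) = R"
  and norm_before_exit_time: "t \<in> {0..<exit_time} \<Longrightarrow> norm (x t) < R"
  using first_hit_time_bounds norm_at_first_hit_time norm_before_first_hit_time
    continuous_on_x start_inside reaches_sphere by blast+

lemma tangent_exit_dist_exit_time: "tangent_exit_dist exit_time = 0"
proof (rule ray_exit_dist_on_sphere[OF norm_at_exit_time])
  have "x exit_time \<bullet> x' exit_time \<ge> 0"
    using exit_time_bounds norm_at_exit_time norm_before_exit_time
    by (intro inner_derivative_nonneg_at_left_norm_max[OF x_deriv]) auto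
  then show "x exit_time \<bullet> sgn (x' exit_time) \<ge> 0"
    by (simp add: sgn_div_norm)
qed

lemma arc_len_plus_tangent_exit_dist_deriv_nonneg:
  assumes t: "t \<in> {0<..<exit_time}"
  shows "\<exists>D. ((\<lambda>s. arc_len x' s + tangent_exit_dist s) has_real_derivative D) (at t) \<and> D \<ge> 0"
proof -
  have t_in: "t \<in> {0..\<tau>1}"
    using t exit_time_bounds by auto
  have at: "at t within {0..\<tau>1} = at t"
    using t exit_time_bounds by (intro at_within_interior) auto
  have inside: "norm (x t) < R"
    using norm_before_exit_time t by auto
  obtain k: "\<kappa> t > 0" and x'': "x'' t = - (\<kappa> t *\<^sub>R x t)"
    using central_attraction[OF t_in] by blast
  have nz: "x' t \<noteq> 0"
    using x'_nonzero[OF t_in] .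
  have "((\<lambda>s. arc_len x' s + tangent_exit_dist s) has_real_derivative
      norm (x' t) + (\<kappa> t * ((norm (x t))\<^sup>2 - (x t \<bullet> sgn (x' t))\<^sup>2) / norm (x' t)
        * (1 - (x t \<bullet> sgn (x' t)) / sqrt ((x t \<bullet> sgn (x' t))\<^sup>2 + R\<^sup>2 - (norm (x t))\<^sup>2))
        - norm (x' t))) (at t)"
    using arc_len_has_real_derivative[OF continuous_on_x' t_in] x_deriv[OF t_in] x'_deriv[OF t_in]
    unfolding at x''
    by (intro DERIV_add ray_exit_dist_along_trajectory_deriv nz inside)
  moreover have "0 \<le> \<kappa> t * ((norm (x t))\<^sup>2 - (x t \<bullet> sgn (x' t))\<^sup>2) / norm (x' t)
        * (1 - (x t \<bullet> sgn (x' t)) / sqrt ((x t \<bullet> sgn (x' t))\<^sup>2 + R\<^sup>2 - (norm (x t))\<^sup>2))"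
    using k nz inside by (intro ray_exit_dist_rate_factor_nonneg) (auto simp: norm_sgn)
  ultimately show ?thesis
    by force
qed

lemma continuous_on_tangent_exit_dist: "continuous_on {0..\<tau>1} tangent_exit_dist"
  unfolding ray_exit_dist_def using x'_nonzero
  by (intro continuous_intros continuous_on_x continuous_on_x') auto

lemma arc_len_plus_tangent_exit_dist_le:
  assumes \<tau>: "\<tau> \<in> {0..exit_time}"
  shows "arc_len x' \<tau> + tangent_exit_dist \<tau> \<le> arc_len x' exit_time"
proof -
  have "{\<tau>..exit_time} \<subseteq> {0..\<tau>1}"
    using \<tau> exit_time_bounds by auto
  then have "continuous_on {\<tau>..exit_time} (\<lambda>s. arc_len x' s + tangent_exit_dist s)"
    by (intro continuous_intros continuous_on_subset[OF continuous_on_tangent_exit_dist]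
        continuous_on_subset[OF continuous_on_arc_len[OF continuous_on_x']])
  moreover have "\<tau> \<le> exit_time"
    using \<tau> by simp
  ultimately have "arc_len x' \<tau> + tangent_exit_dist \<tau> \<le> arc_len x' exit_time + tangent_exit_dist exit_time"
    using \<tau> arc_len_plus_tangent_exit_dist_deriv_nonneg
    by (intro DERIV_nonneg_imp_increasing_open[where f = "\<lambda>s. arc_len x' s + tangent_exit_dist s"]) auto
  then show ?thesis
    by (simp add: tangent_exit_dist_exit_time)
qed

lemma tangent_exit_dist_ge:
  assumes "\<tau> \<in> {0..<exit_time}"
  shows "R - norm (x \<tau>) \<le> tangent_exit_dist \<tau>"
  using assms exit_time_bounds x'_nonzero[of \<tau>]
  by (intro ray_exit_dist_ge norm_before_exit_time) (auto simp: norm_sgn)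

lemma ray_step_arc_len:
  assumes \<tau>: "\<tau> \<in> {0..<exit_time}"
  shows "ray_step x x' \<tau>1 R (arc_len x' \<tau>) = tangent_exit_dist \<tau>"
proof -
  have \<tau>_in: "\<tau> \<in> {0..\<tau>1}"
    using \<tau> exit_time_bounds by auto
  have "(1 / norm (x' \<tau>)) *\<^sub>R x' \<tau> = sgn (x' \<tau>)"
    by (simp add: sgn_div_norm divide_inverse_commute)
  then show ?thesis
    using dist_sphere_hit[OF norm_before_exit_time[OF \<tau>]] x'_nonzero[OF \<tau>_in]
    unfolding ray_step_def Let_def arc_time_arc_len[OF arc_len_strict_mono \<tau>_in]
    by (simp add: norm_sgn)
qed

lemma ray_step_arc_len_exit_time: "ray_step x x' \<tau>1 R (arc_len x' exit_time) = 0"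
  using exit_time_bounds norm_at_exit_time
  by (simp add: ray_step_def sphere_hit_def arc_time_arc_len[OF arc_len_strict_mono])

lemma arc_len_attains:
  assumes "s \<in> {0..arc_len x' exit_time}"
  obtains \<tau> where "\<tau> \<in> {0..exit_time}" and "arc_len x' \<tau> = s"
proof -
  have "continuous_on {0..exit_time} (arc_len x')"
    using exit_time_bounds by (intro continuous_on_subset[OF continuous_on_arc_len[OF continuous_on_x']]) auto
  then show ?thesis
    using IVT'[of "arc_len x'" 0 s exit_time] assms exit_time_bounds that
    by (auto simp: arc_len_def)
qed

lemma ray_step_bounds:
  assumes s: "s \<in> {0..arc_len x' exit_time}"
  shows "0 \<le> ray_step x x' \<tau>1 R s \<and> s + ray_step x x' \<tau>1 R s \<le> arc_len x' exit_time"
proof -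
  obtain \<tau> where \<tau>: "\<tau> \<in> {0..exit_time}" and s_eq: "arc_len x' \<tau> = s"
    using arc_len_attains[OF s] .
  show ?thesis
  proof (cases "\<tau> = exit_time")
    case True
    then show ?thesis
      using s s_eq ray_step_arc_len_exit_time by auto
  next
    case False
    then have \<tau>': "\<tau> \<in> {0..<exit_time}"
      using \<tau> by auto
    then show ?thesis
      using ray_step_arc_len[OF \<tau>'] tangent_exit_dist_ge[OF \<tau>'] norm_before_exit_time[OF \<tau>']
        arc_len_plus_tangent_exit_dist_le[OF \<tau>] s_eq
      by auto
  qed
qed

lemma ray_step_uniformly_pos:
  assumes y: "y < arc_len x' exit_time"
  shows "\<exists>c>0. \<forall>s\<in>{0..y}. c \<le> ray_step x x' \<tau>1 R s"
proof (cases "y < 0")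
  case True
  then show ?thesis
    by (intro exI[of _ 1]) auto
next
  case False
  then obtain \<tau>y where \<tau>y: "\<tau>y \<in> {0..exit_time}" and y_eq: "arc_len x' \<tau>y = y"
    using arc_len_attains[of y] y by auto
  with y have "\<tau>y < exit_time"
    by (cases "\<tau>y = exit_time") auto
  have "continuous_on {0..\<tau>y} (\<lambda>t. norm (x t))"
    using \<tau>y exit_time_bounds by (intro continuous_intros continuous_on_subset[OF continuous_on_x]) auto
  then obtain m where m: "m \<in> {0..\<tau>y}" and max: "\<And>t. t \<in> {0..\<tau>y} \<Longrightarrow> norm (x t) \<le> norm (x m)"
    using continuous_attains_sup[of "{0..\<tau>y}" "\<lambda>t. norm (x t)"] \<tau>y by auto
  show ?thesis
  proof (intro exI conjI ballI)
    show "R - norm (x m) > 0"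
      using norm_before_exit_time[of m] m \<open>\<tau>y < exit_time\<close> by auto
  next
    fix s assume "s \<in> {0..y}"
    then obtain \<tau> where \<tau>: "\<tau> \<in> {0..exit_time}" and s_eq: "arc_len x' \<tau> = s"
      using arc_len_attains[of s] y by auto
    have "\<tau> \<le> \<tau>y"
      using strict_mono_on_less_eq[OF arc_len_strict_mono, of \<tau> \<tau>y] \<tau> \<tau>y exit_time_bounds s_eq y_eq \<open>s \<in> {0..y}\<close>
      by auto
    then show "R - norm (x m) \<le> ray_step x x' \<tau>1 R s"
      using ray_step_arc_len[of \<tau>] tangent_exit_dist_ge[of \<tau>] max[of \<tau>] \<tau> s_eq \<open>\<tau>y < exit_time\<close>
      by auto
  qed
qed

lemma ray_sigma_tendsto: "ray_sigma x x' \<tau>1 R \<longlonglongrightarrow> arc_len x' exit_time"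
proof (rule recurrence_tendsto_barrier)
  show "ray_sigma x x' \<tau>1 R 0 \<le> arc_len x' exit_time"
    using strict_mono_on_leD[OF arc_len_strict_mono, of 0 exit_time] exit_time_bounds
    by (simp add: arc_len_def[of _ 0])
qed (use ray_step_bounds ray_step_uniformly_pos in auto)

end

theorem proposition2:
  fixes x x' x'' :: "real \<Rightarrow> real^3" and \<kappa> :: "real \<Rightarrow> real" and \<tau>1 R :: real
  assumes "R > 0"
    and "\<And>t. t \<in> {0..\<tau>1} \<Longrightarrow> (x has_vector_derivative x' t) (at t within {0..\<tau>1})"
    and "\<And>t. t \<in> {0..\<tau>1} \<Longrightarrow> (x' has_vector_derivative x'' t) (at t within {0..\<tau>1})"
    and "continuous_on {0..\<tau>1} x''"
    and "\<And>t. t \<in> {0..\<tau>1} \<Longrightarrow> x' t \<noteq> 0"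
    and "\<And>t. t \<in> {0..\<tau>1} \<Longrightarrow> \<kappa> t > 0 \<and> x'' t = - (\<kappa> t *\<^sub>R x t)"
    and "norm (x 0) < R"
    and "\<exists>t \<in> {0..\<tau>1}. norm (x t) = R"
  shows "(\<lambda>T. \<Sum>t\<le>T. ray_step x x' \<tau>1 R (ray_sigma x x' \<tau>1 R t))
           \<longlonglongrightarrow> arc_len x' (first_hit_time x \<tau>1 R)"
proof -
  interpret central_trajectory x x' x'' \<kappa> \<tau>1 R
    using assms(2,3,5-8) by unfold_locales
  show ?thesis
    unfolding sum_ray_step_eq_ray_sigma by (rule LIMSEQ_Suc[OF ray_sigma_tendsto])
qed

end
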